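(* For every integer $m\ge 5$, the independence polynomial $I(T_{m,3};t)$ is unimodal and its mode belongs to $\{\rho_m,\rho_m+1,\rho_m+2\}$, where $\rho_m$ denotes the mode of the independence polynomial $I(C_m;t)$ of the cycle $C_m$.
   Context: For a simple graph $G$, the independence polynomial is $I(G;t)=\sum_{k\ge 0}s_k(G)t^k$, where $s_k(G)$ is the number of independent sets (sets of pairwise non-adjacent vertices) of size $k$ in $G$. $C_m$ is the cycle on $m$ vertices; its independence polynomial is known to be unimodal. For integers $m\ge 3$, $n\ge 1$, the tadpole graph $T_{m,n}$ is the simple graph with vertex set $\{x_1,\dots,x_m,y_1,\dots,y_n\}$ and edges $\{x_i,x_{i+1}\}$ for $1\le i\le m-1$, $\{x_m,x_1\}$, $\{y_j,y_{j+1}\}$ for $1\le j\le n-1$, and $\{x_m,y_1\}$. A polynomial $\sum a_kt^k$ with nonnegative coefficients is unimodal if $a_0\le\cdots\le a_m\ge a_{m+1}\ge\cdots$ for some $m$; with $a_{-1}=0$, its mode is the unique $i$ with $a_{i-1}<a_i\ge a_{i+1}\ge a_{i+2}\ge\cdots$. *)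

theory Defs
  imports "HOL-Computational_Algebra.Polynomial"
begin

text \<open>A simple graph is given by a finite vertex set V and a set Ed of 2-element edges.\<close>

definition independent_set :: "'a set \<Rightarrow> 'a set set \<Rightarrow> 'a set \<Rightarrow> bool" where
  "independent_set V Ed S \<longleftrightarrow> S \<subseteq> V \<and> (\<forall>x\<in>S. \<forall>y\<in>S. {x, y} \<notin> Ed)"

definition indep_count :: "'a set \<Rightarrow> 'a set set \<Rightarrow> nat \<Rightarrow> nat" where
  "indep_count V Ed k = card {S. independent_set V Ed S \<and> card S = k}"

text \<open>I(G;t) = sum_k s_k(G) t^k (independent sets have size at most card V).\<close>
definition indep_poly :: "'a set \<Rightarrow> 'a set set \<Rightarrow> nat poly" where
  "indep_poly V Ed = (\<Sum>k\<le>card V. monom (indep_count V Ed k) k)"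

definition unimodal :: "nat poly \<Rightarrow> bool" where
  "unimodal p \<longleftrightarrow> (\<exists>m. (\<forall>i<m. coeff p i \<le> coeff p (Suc i)) \<and>
                        (\<forall>i\<ge>m. coeff p (Suc i) \<le> coeff p i))"

definition is_mode :: "nat poly \<Rightarrow> nat \<Rightarrow> bool" where
  "is_mode p i \<longleftrightarrow> (if i = 0 then 0 < coeff p 0 else coeff p (i - 1) < coeff p i) \<and>
                   (\<forall>j\<ge>i. coeff p (Suc j) \<le> coeff p j)"

definition mode :: "nat poly \<Rightarrow> nat" where
  "mode p = (THE i. is_mode p i)"

definition cycle_vertices :: "nat \<Rightarrow> nat set" where
  "cycle_vertices m = {1..m}"

definition cycle_edges :: "nat \<Rightarrow> nat set set" where
  "cycle_edges m = {{i, i + 1} | i. 1 \<le> i \<and> i \<le> m - 1} \<union> {{m, 1}}"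

text \<open>Tadpole T_{m,n}: x_i = Inl i (1 <= i <= m), y_j = Inr j (1 <= j <= n).\<close>
definition tadpole_vertices :: "nat \<Rightarrow> nat \<Rightarrow> (nat + nat) set" where
  "tadpole_vertices m n = Inl ` {1..m} \<union> Inr ` {1..n}"

definition tadpole_edges :: "nat \<Rightarrow> nat \<Rightarrow> (nat + nat) set set" where
  "tadpole_edges m n =
     {{Inl i, Inl (i + 1)} | i. 1 \<le> i \<and> i \<le> m - 1} \<union> {{Inl m, Inl 1}} \<union>
     {{Inr j, Inr (j + 1)} | j. 1 \<le> j \<and> j \<le> n - 1} \<union> {{Inl m, Inr 1}}"

end

theory Submission
  imports Defs
begin

text \<open>
Deleting the three path vertices of T_{m,3} one after the other gives
I(T_{m,3}) = (1 + 2t) I(C_m) + (t + t^2) I(P_{m-1}), i.e.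
t_k = c_k + 2 c_{k-1} + p_{k-1} + p_{k-2} with c_k, p_k = binom(m - k, k) the coefficients for
C_m and for the path on m - 1 vertices. Both c_{k+1}/c_k and p_{k+1}/p_k are explicit rational
functions of k and m. Comparing them shows that c strictly increases up to its mode rho and then
decreases, that p_k <= p_{k+1} whenever c_{k+1} < c_{k+2}, and that p_{k+1} <= p_k whenever
c_{k+1} <= c_k. Hence t strictly increases below rho and decreases from rho + 2 on.
What is left is that t cannot rise at rho + 1 after falling at rho; this follows from
t_rho t_{rho+2} <= t_{rho+1}^2. Writing every t_k as a rational multiple of p_k turns this into a
polynomial inequality in k and m - 2k whose difference polynomial has nonnegative coefficients.
\<close>

section \<open>Independent sets\<close>

definition indep_sets :: "'a set \<Rightarrow> 'a set set \<Rightarrow> nat \<Rightarrow> 'a set set" where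
  "indep_sets V Ed k = {S. independent_set V Ed S \<and> card S = k}"

lemma indep_count_eq_card: "indep_count V Ed k = card (indep_sets V Ed k)"
  by (simp add: indep_count_def indep_sets_def)

lemma finite_indep_sets: "finite V \<Longrightarrow> finite (indep_sets V Ed k)"
  by (rule finite_subset[of _ "Pow V"]) (auto simp: indep_sets_def independent_set_def)

lemma indep_count_0:
  assumes "finite V"
  shows "indep_count V Ed 0 = 1"
proof -
  have "indep_sets V Ed 0 = {{}}"
    using assms by (auto simp: indep_sets_def independent_set_def dest: finite_subset)
  then show ?thesis by (simp add: indep_count_eq_card)
qed

lemma coeff_indep_poly:
  assumes "finite V"
  shows "coeff (indep_poly V Ed) k = indep_count V Ed k"
proof (cases "k \<le> card V")
  case True
  then show ?thesis unfolding indep_poly_def coeff_sum by simp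
next
  case False
  have "indep_sets V Ed k = {}"
    using False assms card_mono by (fastforce simp: indep_sets_def independent_set_def)
  then show ?thesis using False unfolding indep_poly_def coeff_sum by (simp add: indep_count_eq_card)
qed

lemma indep_count_Suc_delete:
  assumes "finite V" and "v \<in> V" and "{v} \<notin> Ed"
  shows "indep_count V Ed (Suc k) = indep_count (V - {v}) Ed (Suc k)
           + indep_count (V - {v} - {u. {u, v} \<in> Ed}) Ed k"
proof -
  let ?W = "V - {v} - {u. {u, v} \<in> Ed}"
  let ?with_v = "{S \<in> indep_sets V Ed (Suc k). v \<in> S}"
  have split: "indep_sets V Ed (Suc k) = indep_sets (V - {v}) Ed (Suc k) \<union> ?with_v"
    and disjoint: "indep_sets (V - {v}) Ed (Suc k) \<inter> ?with_v = {}"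
    by (auto simp: indep_sets_def independent_set_def)
  have "bij_betw (\<lambda>S. S - {v}) ?with_v (indep_sets ?W Ed k)"
  proof (rule bij_betw_byWitness[where f' = "insert v"])
    show "(\<lambda>S. S - {v}) ` ?with_v \<subseteq> indep_sets ?W Ed k"
    proof
      fix T assume "T \<in> (\<lambda>S. S - {v}) ` ?with_v"
      then obtain S where S: "S \<in> ?with_v" "T = S - {v}" by blast
      then have "finite S"
        using assms(1) by (auto simp: indep_sets_def independent_set_def dest: finite_subset)
      then show "T \<in> indep_sets ?W Ed k"
        using S by (auto simp: indep_sets_def independent_set_def)
    qed
    show "insert v ` indep_sets ?W Ed k \<subseteq> ?with_v"
    proof
      fix S assume "S \<in> insert v ` indep_sets ?W Ed k"
      then obtain T where S: "S = insert v T" and T: "T \<subseteq> V - {v}" "card T = k"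
        "\<forall>x\<in>T. \<forall>y\<in>T. {x, y} \<notin> Ed" "\<forall>x\<in>T. {x, v} \<notin> Ed"
        by (auto simp: indep_sets_def independent_set_def)
      then have "finite T" "v \<notin> T" using assms(1) finite_subset by blast+
      moreover have "\<forall>x\<in>S. \<forall>y\<in>S. {x, y} \<notin> Ed"
        using S T assms(3) by (simp add: insert_commute)
      ultimately show "S \<in> ?with_v"
        using S T assms(2) by (auto simp: indep_sets_def independent_set_def)
    qed
  qed (auto simp: indep_sets_def independent_set_def)
  then have "card ?with_v = indep_count ?W Ed k"
    by (simp add: bij_betw_same_card indep_count_eq_card)
  moreover have "finite (indep_sets (V - {v}) Ed (Suc k))" "finite ?with_v"
    using assms(1) by (simp_all add: finite_indep_sets)
  ultimately show ?thesis
    unfolding indep_count_eq_card by (subst split) (simp add: card_Un_disjoint disjoint)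
qed

lemma indep_count_image:
  assumes "inj_on f V"
    and "\<And>x y. x \<in> V \<Longrightarrow> y \<in> V \<Longrightarrow> {f x, f y} \<in> Ed' \<longleftrightarrow> {x, y} \<in> Ed"
  shows "indep_count (f ` V) Ed' k = indep_count V Ed k"
proof -
  have "bij_betw (image f) (indep_sets V Ed k) (indep_sets (f ` V) Ed' k)"
  proof (rule bij_betw_imageI)
    show "inj_on (image f) (indep_sets V Ed k)"
      using inj_on_image_eq_iff[OF assms(1)]
      by (auto intro!: inj_onI simp: indep_sets_def independent_set_def)
    show "image f ` indep_sets V Ed k = indep_sets (f ` V) Ed' k"
    proof
      show "image f ` indep_sets V Ed k \<subseteq> indep_sets (f ` V) Ed' k"
      proof
        fix T assume "T \<in> image f ` indep_sets V Ed k"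
        then obtain S where S: "S \<in> indep_sets V Ed k" "T = f ` S" by blast
        then have "S \<subseteq> V" by (simp add: indep_sets_def independent_set_def)
        then show "T \<in> indep_sets (f ` V) Ed' k"
          using S assms card_image[OF inj_on_subset[OF assms(1)]]
          by (auto simp: indep_sets_def independent_set_def subset_iff)
      qed
      show "indep_sets (f ` V) Ed' k \<subseteq> image f ` indep_sets V Ed k"
      proof
        fix T assume T: "T \<in> indep_sets (f ` V) Ed' k"
        then obtain S where S: "S \<subseteq> V" "T = f ` S"
          by (auto simp: indep_sets_def independent_set_def subset_image_iff)
        then have "S \<in> indep_sets V Ed k"
          using T assms inj_on_subset[OF assms(1) S(1)]
          by (auto simp: indep_sets_def independent_set_def card_image subset_iff)
        then show "T \<in> image f ` indep_sets V Ed k" using S by blast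
      qed
    qed
  qed
  then show ?thesis by (simp add: bij_betw_same_card indep_count_eq_card)
qed

lemma indep_count_cong:
  assumes "\<And>x y. x \<in> V \<Longrightarrow> y \<in> V \<Longrightarrow> {x, y} \<in> Ed \<longleftrightarrow> {x, y} \<in> Ed'"
  shows "indep_count V Ed k = indep_count V Ed' k"
  using indep_count_image[of id V Ed Ed' k] assms by simp

section \<open>Paths, cycles and the tadpole\<close>

definition path_edges :: "nat set set" where
  "path_edges = {{i, Suc i} | i. True}"

lemma mem_path_edges: "{u, v} \<in> path_edges \<longleftrightarrow> u = Suc v \<or> v = Suc u"
  by (auto simp: path_edges_def doubleton_eq_iff)

lemma indep_count_path: "indep_count {a..<a + n} path_edges k = (n + 1 - k) choose k"
proof (induction n arbitrary: k rule: less_induct)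
  case (less n)
  show ?case
  proof (cases k)
    case 0
    then show ?thesis by (simp add: indep_count_0)
  next
    case (Suc j)
    show ?thesis
    proof (cases n)
      case 0
      then show ?thesis
        using Suc by (simp add: indep_count_eq_card indep_sets_def independent_set_def)
    next
      case (Suc n')
      have "{u} \<notin> path_edges" for u
        by (auto simp: path_edges_def doubleton_eq_iff)
      moreover have "{a..<a + n} - {a + n'} = {a..<a + n'}"
        and "{a..<a + n} - {a + n'} - {u. {u, a + n'} \<in> path_edges} = {a..<a + (n' - 1)}"
        using Suc by (auto simp: mem_path_edges)
      ultimately have "indep_count {a..<a + n} path_edges (Suc j) =
          indep_count {a..<a + n'} path_edges (Suc j) + indep_count {a..<a + (n' - 1)} path_edges j"
        using indep_count_Suc_delete[of "{a..<a + n}" "a + n'" path_edges j] Suc by simp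
      also have "\<dots> = (n' - j choose Suc j) + (n' - j choose j)"
        using less.IH[of n'] less.IH[of "n' - 1"] Suc by (cases n'; cases j) auto
      also have "\<dots> = (n + 1 - Suc j) choose Suc j"
        using Suc by (cases "j \<le> n'") (auto simp: Suc_diff_le binomial_eq_0)
      finally show ?thesis using \<open>k = Suc j\<close> by simp
    qed
  qed
qed

text \<open>\<open>path_num m k\<close> counts the independent k-sets of the path on m - 1 vertices, i.e. of
  C_m with one vertex removed.\<close>

definition path_num :: "nat \<Rightarrow> nat \<Rightarrow> nat" where
  "path_num m k = (m - k) choose k"

definition cycle_num :: "nat \<Rightarrow> nat \<Rightarrow> nat" where
  "cycle_num m k = (if k = 0 then 1 else ((m - k) choose k) + ((m - k - 1) choose (k - 1)))"

definition tadpole_num :: "nat \<Rightarrow> nat \<Rightarrow> nat" where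
  "tadpole_num m k = cycle_num m k
     + (if k = 0 then 0 else 2 * cycle_num m (k - 1) + path_num m (k - 1))
     + (if k \<le> 1 then 0 else path_num m (k - 2))"

lemma cycle_num_0 [simp]: "cycle_num m 0 = 1"
  by (simp add: cycle_num_def)

lemma cycle_num_1: "1 \<le> m \<Longrightarrow> cycle_num m 1 = m"
  by (simp add: cycle_num_def)

lemma tadpole_num_0 [simp]: "tadpole_num m 0 = 1"
  by (simp add: tadpole_num_def)

lemma tadpole_num_Suc_Suc:
  "tadpole_num m (k + 2) = cycle_num m (k + 2) + 2 * cycle_num m (k + 1) + path_num m (k + 1) + path_num m k"
  by (simp add: tadpole_num_def)

lemma mem_cycle_edges:
  "{x, y} \<in> cycle_edges m \<longleftrightarrow>
     (\<exists>i. 1 \<le> i \<and> i \<le> m - 1 \<and> (x = i \<and> y = i + 1 \<or> y = i \<and> x = i + 1))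
     \<or> (x = m \<and> y = 1) \<or> (x = 1 \<and> y = m)"
  unfolding cycle_edges_def by (auto simp: doubleton_eq_iff)

lemma cycle_edges_eq_path_edges:
  assumes "x \<in> {1..<m}" "y \<in> {1..<m}"
  shows "{x, y} \<in> cycle_edges m \<longleftrightarrow> {x, y} \<in> path_edges"
proof
  assume "{x, y} \<in> cycle_edges m"
  then show "{x, y} \<in> path_edges"
    using assms unfolding mem_cycle_edges mem_path_edges by auto
next
  have cycle_edge: "{i, i + 1} \<in> cycle_edges m" if "1 \<le> i" "i \<le> m - 1" for i
    using that unfolding cycle_edges_def by blast
  assume "{x, y} \<in> path_edges"
  then have "x = Suc y \<or> y = Suc x" by (simp add: mem_path_edges)
  then show "{x, y} \<in> cycle_edges m"
    using assms cycle_edge[of x] cycle_edge[of y] by (auto simp: insert_commute)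
qed

lemma indep_count_cycle_segment:
  assumes "1 \<le> a" "a + n \<le> m"
  shows "indep_count {a..<a + n} (cycle_edges m) k = (n + 1 - k) choose k"
proof -
  have "indep_count {a..<a + n} (cycle_edges m) k = indep_count {a..<a + n} path_edges k"
    using assms by (intro indep_count_cong cycle_edges_eq_path_edges) auto
  then show ?thesis by (simp add: indep_count_path)
qed

lemma indep_count_cycle:
  assumes "3 \<le> m"
  shows "indep_count (cycle_vertices m) (cycle_edges m) k = cycle_num m k"
proof (cases k)
  case 0
  then show ?thesis by (simp add: indep_count_0 cycle_vertices_def)
next
  case (Suc j)
  have "{m} \<notin> cycle_edges m"
    using assms by (auto simp: cycle_edges_def doubleton_eq_iff)
  moreover have "{1..m} - {m} = {1..<1 + (m - 1)}"
    and "{1..m} - {m} - {u. {u, m} \<in> cycle_edges m} = {2..<2 + (m - 3)}"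
    using assms unfolding mem_cycle_edges by (auto intro!: exI[of _ "m - 1"])
  ultimately have "indep_count {1..m} (cycle_edges m) (Suc j) =
      indep_count {1..<1 + (m - 1)} (cycle_edges m) (Suc j)
      + indep_count {2..<2 + (m - 3)} (cycle_edges m) j"
    using indep_count_Suc_delete[of "{1..m}" m "cycle_edges m" j] assms by simp
  also have "\<dots> = cycle_num m (Suc j)"
    using assms indep_count_cycle_segment[of 1 "m - 1" m "Suc j"]
      indep_count_cycle_segment[of 2 "m - 3" m j] by (simp add: cycle_num_def)
  finally show ?thesis using Suc by (simp add: cycle_vertices_def)
qed

lemma tadpole_edge_Inl_Inl_iff: "{Inl x, Inl y} \<in> tadpole_edges m n \<longleftrightarrow> {x, y} \<in> cycle_edges m"
  unfolding tadpole_edges_def cycle_edges_def by (auto simp: doubleton_eq_iff)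

lemma tadpole_edge_Inr_iff:
  "{u, Inr j} \<in> tadpole_edges m n \<longleftrightarrow>
    (j = 1 \<and> u = Inl m) \<or> (1 \<le> j \<and> j < n \<and> u = Inr (j + 1)) \<or> (2 \<le> j \<and> j \<le> n \<and> u = Inr (j - 1))"
  unfolding tadpole_edges_def by (cases u) (auto simp: doubleton_eq_iff)

lemma indep_count_tadpole_cycle_part:
  assumes "3 \<le> m"
  shows "indep_count (Inl ` {1..m}) (tadpole_edges m n) k = cycle_num m k"
  using indep_count_image[of Inl "{1..m}" "tadpole_edges m n" "cycle_edges m" k]
    indep_count_cycle[OF assms, of k]
  by (simp add: tadpole_edge_Inl_Inl_iff cycle_vertices_def)

lemma indep_count_tadpole_path_part:
  assumes "3 \<le> m"
  shows "indep_count (Inl ` {1..<m}) (tadpole_edges m n) k = path_num m k"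
proof -
  have "indep_count (Inl ` {1..<m}) (tadpole_edges m n) k = indep_count {1..<1 + (m - 1)} (cycle_edges m) k"
    using indep_count_image[of Inl "{1..<m}" "tadpole_edges m n" "cycle_edges m" k] assms
    by (simp add: tadpole_edge_Inl_Inl_iff)
  also have "\<dots> = path_num m k"
    using assms indep_count_cycle_segment[of 1 "m - 1" m k] by (simp add: path_num_def Suc_diff_le)
  finally show ?thesis .
qed

lemma indep_count_tadpole:
  assumes "3 \<le> m"
  shows "indep_count (tadpole_vertices m 3) (tadpole_edges m 3) k = tadpole_num m k"
proof -
  define E where "E = tadpole_edges m 3"
  define V0 :: "(nat + nat) set" where "V0 = Inl ` {1..m}"
  define V1 where "V1 = insert (Inr 1) V0"
  define V2 where "V2 = insert (Inr 2) V1"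
  define V3 where "V3 = insert (Inr 3) V2"
  have "finite V0" by (simp add: V0_def)
  have loops: "{Inr j} \<notin> E" for j
    using tadpole_edge_Inr_iff[of "Inr j" j m 3] by (auto simp: E_def)
  have "V3 - {Inr 3} = V2" "V3 - {Inr 3} - {u. {u, Inr 3} \<in> E} = V1"
    by (auto simp: V3_def V2_def V1_def V0_def E_def tadpole_edge_Inr_iff)
  then have del3: "indep_count V3 E (Suc j) = indep_count V2 E (Suc j) + indep_count V1 E j" for j
    using indep_count_Suc_delete[of V3 "Inr 3" E j] \<open>finite V0\<close> loops
    by (simp add: V3_def V2_def V1_def)
  have "V2 - {Inr 2} = V1" "V2 - {Inr 2} - {u. {u, Inr 2} \<in> E} = V0"
    by (auto simp: V2_def V1_def V0_def E_def tadpole_edge_Inr_iff)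
  then have del2: "indep_count V2 E (Suc j) = indep_count V1 E (Suc j) + indep_count V0 E j" for j
    using indep_count_Suc_delete[of V2 "Inr 2" E j] \<open>finite V0\<close> loops
    by (simp add: V2_def V1_def)
  have "V1 - {Inr 1} = V0" "V1 - {Inr 1} - {u. {u, Inr 1} \<in> E} = Inl ` {1..<m}"
    using assms by (auto simp: V1_def V0_def E_def tadpole_edge_Inr_iff)
  then have del1: "indep_count V1 E (Suc j) = indep_count V0 E (Suc j) + path_num m j" for j
    using indep_count_Suc_delete[of V1 "Inr 1" E j] \<open>finite V0\<close> loops
      indep_count_tadpole_path_part[OF assms]
    by (simp add: V1_def E_def)
  have V0_count: "indep_count V0 E j = cycle_num m j" for j
    using indep_count_tadpole_cycle_part[OF assms] by (simp add: V0_def E_def)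
  have V1_count: "indep_count V1 E j = cycle_num m j + (if j = 0 then 0 else path_num m (j - 1))" for j
    using \<open>finite V0\<close> by (cases j) (simp add: V1_def indep_count_0, simp add: del1 V0_count)
  have "tadpole_vertices m 3 = V3"
    by (auto simp: tadpole_vertices_def V3_def V2_def V1_def V0_def)
  then show ?thesis
    using \<open>finite V0\<close> unfolding E_def[symmetric]
    by (cases k) (simp add: V3_def V2_def V1_def indep_count_0,
        simp add: del3 del2 V1_count V0_count tadpole_num_def)
qed

section \<open>Ratios of consecutive coefficients\<close>

lemma less_factor_of_cross_eq:
  fixes a b x y :: nat
  assumes "a * y = b * x" "x < y" "0 < a"
  shows "a < b"
proof -
  have "a * x < b * x" using assms by (metis mult_less_cancel1)
  then show ?thesis by (simp add: mult_less_cancel2)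
qed

lemma less_of_cross_eq:
  fixes a b x y :: nat
  assumes "a * y = b * x" "a < b" "0 < y"
  shows "x < y"
proof -
  have "b * x < b * y" using assms by (metis mult_less_mono1)
  then show ?thesis by (simp add: mult_less_cancel1)
qed

lemma le_of_cross_eq:
  fixes a b x y :: nat
  assumes "a * y = b * x" "a \<le> b" "0 < b"
  shows "x \<le> y"
proof -
  have "b * x \<le> b * y" using assms by (metis mult_le_mono1)
  then show ?thesis using assms(3) by simp
qed

lemma path_num_eq_0: "m < 2 * k \<Longrightarrow> path_num m k = 0"
  by (simp add: path_num_def binomial_eq_0)

lemma cycle_num_eq_0: "m < 2 * k \<Longrightarrow> 2 \<le> k \<Longrightarrow> cycle_num m k = 0"
  by (simp add: cycle_num_def binomial_eq_0)

lemma cycle_num_path_num: "(m - k) * cycle_num m k = m * path_num m k"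
proof (cases "k = 0 \<or> m < k")
  case True
  then show ?thesis by (auto simp: cycle_num_def path_num_def binomial_eq_0)
next
  case False
  have "(m - k) * ((m - k - 1) choose (k - 1)) = k * ((m - k) choose k)"
    using times_binomial_minus1_eq[of k "m - k"] False by simp
  then show ?thesis
    using False by (simp add: cycle_num_def path_num_def algebra_simps)
qed

lemma path_num_Suc:
  "(k + 1) * (m - k) * path_num m (k + 1) = (m - 2 * k) * (m - 2 * k - 1) * path_num m k"
proof -
  define n where "n = m - k"
  have "(k + 1) * ((n - 1) choose (k + 1)) = (n - 1 - k) * ((n - 1) choose k)"
    using binomial_absorption[of k "n - 1"] binomial_absorb_comp[of "n - 1" k] by simp
  moreover have "n * ((n - 1) choose k) = (n - k) * (n choose k)"
    using binomial_absorb_comp[of n k] by simp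
  moreover have "path_num m (k + 1) = (n - 1) choose (k + 1)" "path_num m k = n choose k"
    "n - k = m - 2 * k" "n - 1 - k = m - 2 * k - 1"
    by (simp_all add: path_num_def n_def)
  ultimately show ?thesis
    unfolding n_def[symmetric] by (metis mult.assoc mult.commute)
qed

lemma cycle_num_Suc:
  assumes "k < m"
  shows "(k + 1) * (m - k - 1) * cycle_num m (k + 1) = (m - 2 * k) * (m - 2 * k - 1) * cycle_num m k"
proof -
  obtain d where m: "m = k + 1 + d" using assms less_imp_Suc_add by fastforce
  define r where "r = (m - 2 * k) * (m - 2 * k - 1)"
  have "d * cycle_num m (k + 1) = m * path_num m (k + 1)"
    and "(d + 1) * cycle_num m k = m * path_num m k"
    using cycle_num_path_num[of m "k + 1"] cycle_num_path_num[of m k] m by simp_all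
  moreover have "(k + 1) * (d + 1) * path_num m (k + 1) = r * path_num m k"
    using path_num_Suc[of k m] m by (simp add: r_def)
  ultimately have "(d + 1) * ((k + 1) * d * cycle_num m (k + 1)) = (d + 1) * (r * cycle_num m k)"
    by algebra
  then have "(k + 1) * d * cycle_num m (k + 1) = r * cycle_num m k"
    by (simp only: mult_cancel1) simp
  then show ?thesis using m by (simp add: r_def)
qed

lemma cycle_num_decreasing_step:
  assumes "cycle_num m (k + 1) \<le> cycle_num m k"
  shows "cycle_num m (k + 2) \<le> cycle_num m (k + 1)"
proof (rule ccontr)
  assume up: "\<not> ?thesis"
  then have "\<not> m < 2 * (k + 2)" using cycle_num_eq_0[of m "k + 2"] by auto
  then obtain y where m: "m = 2 * k + 4 + y" using le_Suc_ex[of "2 * k + 4" m] by auto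
  have next_ratio: "(k + 2) * (k + 2 + y) * cycle_num m (k + 2) = (y + 2) * (y + 1) * cycle_num m (k + 1)"
    using cycle_num_Suc[of "k + 1" m] m by (simp add: numeral_eq_Suc)
  have ratio: "(k + 1) * (k + 3 + y) * cycle_num m (k + 1) = (y + 4) * (y + 3) * cycle_num m k"
    using cycle_num_Suc[of k m] m by (simp add: numeral_eq_Suc)
  have "(k + 2) * (k + 2 + y) < (y + 2) * (y + 1)"
    using less_factor_of_cross_eq[OF next_ratio] up by simp
  then have "(k + 1) * (k + 3 + y) < (y + 4) * (y + 3)"
    by (simp add: algebra_simps)
  moreover have "0 < cycle_num m (k + 1)"
  proof (rule gr0I)
    assume "cycle_num m (k + 1) = 0"
    then show False using next_ratio up by simp
  qed
  ultimately have "cycle_num m k < cycle_num m (k + 1)"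
    using less_of_cross_eq[OF ratio] by simp
  then show False using assms by simp
qed

lemma path_num_mono_step:
  assumes "cycle_num m (k + 1) < cycle_num m (k + 2)"
  shows "path_num m k \<le> path_num m (k + 1)"
proof -
  have "\<not> m < 2 * (k + 2)" using assms cycle_num_eq_0[of m "k + 2"] by auto
  then obtain y where m: "m = 2 * k + 4 + y" using le_Suc_ex[of "2 * k + 4" m] by auto
  have cycle_ratio: "(k + 2) * (k + 2 + y) * cycle_num m (k + 2) = (y + 2) * (y + 1) * cycle_num m (k + 1)"
    using cycle_num_Suc[of "k + 1" m] m by (simp add: numeral_eq_Suc)
  have path_ratio: "(k + 1) * (k + 4 + y) * path_num m (k + 1) = (y + 4) * (y + 3) * path_num m k"
    using path_num_Suc[of k m] m by (simp add: numeral_eq_Suc)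
  have small: "(k + 2) * (k + 2 + y) < (y + 2) * (y + 1)"
    using less_factor_of_cross_eq[OF cycle_ratio] assms by simp
  have "k < y"
  proof (rule ccontr)
    assume "\<not> k < y"
    then have "(y + 2) * (y + 1) \<le> (k + 2) * (k + 2 + y)" by (intro mult_le_mono) auto
    then show False using small by simp
  qed
  then have "(k + 1) * (k + 4 + y) \<le> (y + 4) * (y + 3)"
    using small by (simp add: algebra_simps)
  then show ?thesis
    using le_of_cross_eq[OF path_ratio] by simp
qed

lemma path_num_antimono_step:
  assumes "cycle_num m (k + 1) \<le> cycle_num m k"
  shows "path_num m (k + 1) \<le> path_num m k"
proof (cases "m < 2 * (k + 1)")
  case True
  then show ?thesis by (simp add: path_num_eq_0)
next
  case False
  have "m * (m - k) * path_num m (k + 1) = (m - k) * ((m - k - 1) * cycle_num m (k + 1))"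
    using cycle_num_path_num[of m "k + 1"] by (simp add: algebra_simps)
  also have "\<dots> \<le> (m - k) * ((m - k - 1) * cycle_num m k)"
    using assms by simp
  also have "\<dots> \<le> (m - k) * ((m - k) * cycle_num m k)"
    by (intro mult_le_mono) auto
  also have "\<dots> = m * (m - k) * path_num m k"
    using cycle_num_path_num[of m k] by (simp add: algebra_simps)
  finally show ?thesis using False by simp
qed

section \<open>Log-concavity of the tadpole coefficients\<close>

text \<open>The three summands come from c_k, from 2 c_{k-1} + p_{k-1}, and from p_{k-2}, each
  rewritten as a multiple of p_k with a = m - 2k.\<close>

definition tadpole_ratio_num :: "nat \<Rightarrow> nat \<Rightarrow> nat" where
  "tadpole_ratio_num k a =
     (2 * k + a) * (a + 1) * (a + 2) * (a + 3) * (a + 4)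
     + (2 * k * (2 * k + a) + k * (k + a + 1)) * (k + a) * (a + 3) * (a + 4)
     + k * (k - 1) * (k + a + 1) * (k + a + 2) * (k + a)"

lemma tadpole_num_path_num_ratio:
  assumes m: "m = 2 * j + a + 4"
  shows "(j + a + 2) * (a + 1) * (a + 2) * (a + 3) * (a + 4) * tadpole_num m (j + 2)
       = tadpole_ratio_num (j + 2) a * path_num m (j + 2)"
proof -
  define P where "P = path_num m (j + 2)"
  define p1 where "p1 = path_num m (j + 1)"
  define p2 where "p2 = path_num m j"
  define c0 where "c0 = cycle_num m (j + 2)"
  define c1 where "c1 = cycle_num m (j + 1)"
  have t: "tadpole_num m (j + 2) = c0 + 2 * c1 + p1 + p2"
    by (simp add: tadpole_num_def c0_def c1_def p1_def p2_def numeral_2_eq_2)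
  have c0_P: "(j + a + 2) * c0 = m * P"
    using cycle_num_path_num[of m "j + 2"] m by (simp add: c0_def P_def ac_simps)
  have c1_p1: "(j + a + 3) * c1 = m * p1"
    using cycle_num_path_num[of m "j + 1"] m by (simp add: c1_def p1_def ac_simps)
  have p1_P: "(j + 2) * (j + a + 3) * P = (a + 2) * (a + 1) * p1"
    using path_num_Suc[of "j + 1" m] m by (simp add: P_def p1_def ac_simps)
  have p2_p1: "(j + 1) * (j + a + 4) * p1 = (a + 4) * (a + 3) * p2"
    using path_num_Suc[of j m] m by (simp add: p1_def p2_def ac_simps)
  have "(j + a + 3) * ((a + 1) * (a + 2) * c1) = (j + a + 3) * (m * (j + 2) * P)"
    using c1_p1 p1_P by algebra
  then have c1_P: "(a + 1) * (a + 2) * c1 = m * (j + 2) * P"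
    by (simp only: mult_cancel1) simp
  have p2_P: "(a + 1) * (a + 2) * (a + 3) * (a + 4) * p2 = (j + 1) * (j + a + 4) * (j + 2) * (j + a + 3) * P"
    using p1_P p2_p1 by algebra
  have pred: "j + 2 - 1 = j + 1" by simp
  show ?thesis
    unfolding t P_def[symmetric] tadpole_ratio_num_def pred using c0_P c1_P p1_P p2_P m by algebra
qed

lemma tadpole_ratio_num_log_concave:
  fixes K A :: nat
  shows "tadpole_ratio_num (K + 2) (A + 4) * tadpole_ratio_num (K + 4) A
      * ((K + A + 5) * (A + 5) * (A + 6) * (K + 3))
    \<le> (tadpole_ratio_num (K + 3) (A + 2))\<^sup>2 * ((A + 7) * (A + 8) * (K + A + 4) * (K + 4))"
proof -
  have "(tadpole_ratio_num (K + 3) (A + 2))\<^sup>2 * ((A + 7) * (A + 8) * (K + A + 4) * (K + 4))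
    = tadpole_ratio_num (K + 2) (A + 4) * tadpole_ratio_num (K + 4) A
      * ((K + A + 5) * (A + 5) * (A + 6) * (K + 3))
    + (
     101258035200 + 199070714880*A + 179093996928*A^2 + 97595128512*A^3 + 35928496568*A^4 +
     9431889316*A^5 + 1815699298*A^6 + 259393055*A^7 + 27486534*A^8 + 2132583*A^9 +
     117694*A^10 + 4373*A^11 + 98*A^12 + A^13 +
     188322036480*K + 340456628736*K*A + 279849527088*K*A^2 + 138267134880*K*A^3 +
     45719489384*K*A^4 + 10654891044*K*A^5 + 1793787415*K*A^6 + 219707397*K*A^7 +
     19420872*K*A^8 + 1207578*K*A^9 + 50107*K*A^10 + 1245*K*A^11 + 14*K*A^12 +
     158394916224*K^2 + 261695702736*K^2*A + 195032173080*K^2*A^2 + 86530825224*K^2*A^3 +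
     25389178102*K^2*A^4 + 5171341991*K^2*A^5 + 745858069*K^2*A^6 + 76142729*K^2*A^7 +
     5389408*K^2*A^8 + 251753*K^2*A^9 + 6981*K^2*A^10 + 87*K^2*A^11 +
     79468172304*K^3 + 119129844968*K^3*A + 79768077020*K^3*A^2 + 31413524952*K^3*A^3 +
     8056158532*K^3*A^4 + 1405543742*K^3*A^5 + 168904610*K^3*A^6 + 13800008*K^3*A^7 +
     733348*K^3*A^8 + 22878*K^3*A^9 + 318*K^3*A^10 +
     26423981096*K^4 + 35625953380*K^4*A + 21192393308*K^4*A^2 + 7299729013*K^4*A^3 +
     1604340302*K^4*A^4 + 233279536*K^4*A^5 + 22436702*K^4*A^6 + 1376062*K^4*A^7 +
     48818*K^4*A^8 + 763*K^4*A^9 +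
     6130786140*K^5 + 7348986346*K^5*A + 3826798401*K^5*A^2 + 1130533885*K^5*A^3 +
     207223452*K^5*A^4 + 24128968*K^5*A^5 + 1742634*K^5*A^6 + 71356*K^5*A^7 + 1268*K^5*A^8 +
     1022186902*K^6 + 1072203044*K^6*A + 478857783*K^6*A^2 + 118014195*K^6*A^3 +
     17329650*K^6*A^4 + 1515906*K^6*A^5 + 73122*K^6*A^6 + 1500*K^6*A^7 +
     125179092*K^7 + 112299234*K^7*A + 41758102*K^7*A^2 + 8234850*K^7*A^3 + 907930*K^7*A^4 +
     53040*K^7*A^5 + 1282*K^7*A^6 +
     11495478*K^8 + 8533296*K^8*A + 2526630*K^8*A^2 + 372795*K^8*A^3 + 27390*K^8*A^4 +
     801*K^8*A^5 +
     800580*K^9 + 469438*K^9*A + 103265*K^9*A^2 + 10097*K^9*A^3 + 370*K^9*A^4 +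
     41074*K^10 + 17780*K^10*A + 2575*K^10*A^2 + 125*K^10*A^3 +
     1404*K^11 + 398*K^11*A + 28*K^11*A^2 +
     26*K^12 + 4*K^12*A)"
  proof -
    have pred: "K + 2 - 1 = K + 1" "K + 3 - 1 = K + 2" "K + 4 - 1 = K + 3" by simp_all
    show ?thesis unfolding tadpole_ratio_num_def pred by algebra
  qed
  then show ?thesis by simp
qed

lemma tadpole_num_log_concave:
  assumes "3 \<le> k" "2 * k + 2 \<le> m"
  shows "tadpole_num m (k - 1) * tadpole_num m (k + 1) \<le> (tadpole_num m k)\<^sup>2"
proof -
  define K where "K = k - 3"
  define A where "A = m - 2 * K - 8"
  have k: "k = K + 3" and m: "m = 2 * K + A + 8"
    using assms by (simp_all add: K_def A_def)
  have eqs: "K + 1 + 2 = K + 3" "K + 2 + 2 = K + 4" "K + 2 + 1 = K + 3" "K + 3 + 1 = K + 4"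
    "m - (K + 2) = K + A + 6" "m - 2 * (K + 2) = A + 4" "A + 4 - 1 = A + 3"
    "m - (K + 3) = K + A + 5" "m - 2 * (K + 3) = A + 2" "A + 2 - 1 = A + 1"
    using m by simp_all
  have "m = 2 * (K + 1) + (A + 2) + 4" "m = 2 * K + (A + 4) + 4" "m = 2 * (K + 2) + A + 4"
    using m by simp_all
  note t_ratios = tadpole_num_path_num_ratio[OF this(1), unfolded eqs]
    tadpole_num_path_num_ratio[OF this(2), unfolded eqs]
    tadpole_num_path_num_ratio[OF this(3), unfolded eqs]
  note p_ratios = path_num_Suc[of "K + 2" m, unfolded eqs] path_num_Suc[of "K + 3" m, unfolded eqs]
  define P where "P = path_num m (K + 3)"
  define Na where "Na = tadpole_ratio_num (K + 3) (A + 2)"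
  define Nb where "Nb = tadpole_ratio_num (K + 2) (A + 4)"
  define Nc where "Nc = tadpole_ratio_num (K + 4) A"
  \<comment> \<open>Multiplying by M turns both sides into C P^2 times the corresponding sides of
    \<open>tadpole_ratio_num_log_concave\<close>.\<close>
  define D0 where "D0 = (K + A + 5) * (A + 3) * (A + 4) * (A + 5) * (A + 6)"
  define D1 where "D1 = (K + A + 6) * (A + 5) * (A + 6) * (A + 7) * (A + 8)"
  define D2 where "D2 = (K + A + 4) * (A + 1) * (A + 2) * (A + 3) * (A + 4)"
  define M where "M = D0\<^sup>2 * D1 * D2 * ((A + 3) * (A + 4) * (K + 4) * (K + A + 5))"
  define C where
    "C = (K + A + 6) * (A + 5) * (A + 6) * (A + 1) * (A + 2) * (A + 3)\<^sup>2 * (A + 4)\<^sup>2 * (K + A + 5)"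
  have "M * (tadpole_num m (K + 2) * tadpole_num m (K + 4))
      = C * P\<^sup>2 * (Nb * Nc * ((K + A + 5) * (A + 5) * (A + 6) * (K + 3)))"
    using t_ratios(2,3) p_ratios unfolding M_def C_def D0_def D1_def D2_def P_def Nb_def Nc_def
    by algebra
  also have "\<dots> \<le> C * P\<^sup>2 * (Na\<^sup>2 * ((A + 7) * (A + 8) * (K + A + 4) * (K + 4)))"
    using tadpole_ratio_num_log_concave[of K A] unfolding Na_def Nb_def Nc_def
    by (rule mult_le_mono2)
  also have "\<dots> = M * (tadpole_num m (K + 3))\<^sup>2"
    using t_ratios(1) unfolding M_def C_def D0_def D1_def D2_def P_def Na_def by algebra
  finally have "M * (tadpole_num m (K + 2) * tadpole_num m (K + 4)) \<le> M * (tadpole_num m (K + 3))\<^sup>2" .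
  moreover have "0 < M" by (simp add: M_def D0_def D1_def D2_def)
  ultimately have "tadpole_num m (K + 2) * tadpole_num m (K + 4) \<le> (tadpole_num m (K + 3))\<^sup>2"
    by simp
  moreover have "k - 1 = K + 2" "k + 1 = K + 4" using k by simp_all
  ultimately show ?thesis unfolding k by (simp only:)
qed

lemma le_of_log_concave:
  fixes a b c :: nat
  assumes "a * c \<le> b\<^sup>2" "b \<le> a" "0 < a"
  shows "c \<le> b"
proof (rule ccontr)
  assume "\<not> c \<le> b"
  then have "a * b < a * c" using assms(3) by simp
  moreover have "b * b \<le> a * b" using assms(2) by simp
  ultimately show False using assms(1) unfolding power2_eq_square by linarith
qed

section \<open>Peaks and modes\<close>

definition peaks_at :: "(nat \<Rightarrow> nat) \<Rightarrow> nat \<Rightarrow> bool" where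
  "peaks_at f r \<longleftrightarrow> (\<forall>j<r. f j < f (Suc j)) \<and> (\<forall>j\<ge>r. f (Suc j) \<le> f j)"

lemma unimodal_mode_eq_if_peaks_at:
  assumes "0 < coeff p 0" "peaks_at (coeff p) r"
  shows "unimodal p \<and> mode p = r"
proof
  show "unimodal p"
    using assms(2) unfolding unimodal_def peaks_at_def by (blast intro: less_imp_le)
  have "is_mode p r"
    using assms unfolding is_mode_def peaks_at_def by (cases r) auto
  moreover have "i = r" if "is_mode p i" for i
  proof (rule ccontr)
    assume "i \<noteq> r"
    then consider "i < r" | "r < i" by linarith
    then show False
    proof cases
      case 1
      then have "coeff p i < coeff p (Suc i)" "coeff p (Suc i) \<le> coeff p i"
        using that assms(2) unfolding is_mode_def peaks_at_def by auto
      then show False by simp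
    next
      case 2
      then have "coeff p (i - 1) < coeff p i"
        using that unfolding is_mode_def by simp
      moreover have "r \<le> i - 1" using 2 by simp
      then have "coeff p (Suc (i - 1)) \<le> coeff p (i - 1)"
        using assms(2) unfolding peaks_at_def by blast
      ultimately show False using 2 by simp
    qed
  qed
  ultimately show "mode p = r"
    unfolding mode_def by (rule the_equality)
qed

lemma peaks_at_within_two:
  fixes f :: "nat \<Rightarrow> nat"
  assumes up: "\<And>j. j < r \<Longrightarrow> f j < f (Suc j)"
    and down: "\<And>j. r + 2 \<le> j \<Longrightarrow> f (Suc j) \<le> f j"
    and turn: "f (r + 1) \<le> f r \<Longrightarrow> f (r + 2) \<le> f (r + 1)"
  shows "\<exists>\<mu>\<in>{r, r + 1, r + 2}. peaks_at f \<mu>"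
proof -
  consider "f (r + 1) \<le> f r" | "f r < f (r + 1)" "f (r + 2) \<le> f (r + 1)"
    | "f r < f (r + 1)" "f (r + 1) < f (r + 2)"
    by linarith
  then show ?thesis
  proof cases
    case 1
    have "f (Suc j) \<le> f j" if "r \<le> j" for j
      using that 1 turn[OF 1] down[of j] by (cases "j = r \<or> j = r + 1") auto
    then show ?thesis using up unfolding peaks_at_def by blast
  next
    case 2
    have "f j < f (Suc j)" if "j < r + 1" for j
      using that 2 up[of j] by (cases "j = r") auto
    moreover have "f (Suc j) \<le> f j" if "r + 1 \<le> j" for j
      using that 2 down[of j] by (cases "j = r + 1") auto
    ultimately show ?thesis unfolding peaks_at_def by blast
  next
    case 3
    have "f j < f (Suc j)" if "j < r + 2" for j
      using that 3 up[of j] by (cases "j = r \<or> j = r + 1") auto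
    then show ?thesis using down unfolding peaks_at_def by blast
  qed
qed

lemma cycle_num_peaks:
  assumes "2 \<le> m"
  shows "\<exists>\<rho>. peaks_at (cycle_num m) \<rho>"
proof -
  define \<rho> where "\<rho> = (LEAST k. cycle_num m (k + 1) \<le> cycle_num m k)"
  have "cycle_num m (m + 1) \<le> cycle_num m m"
    using cycle_num_eq_0[of m "m + 1"] assms by simp
  then have turn: "cycle_num m (\<rho> + 1) \<le> cycle_num m \<rho>"
    unfolding \<rho>_def by (rule LeastI)
  have "cycle_num m j < cycle_num m (Suc j)" if "j < \<rho>" for j
    using not_less_Least[of j "\<lambda>k. cycle_num m (k + 1) \<le> cycle_num m k"] that
    unfolding \<rho>_def by simp
  moreover have "cycle_num m (Suc j) \<le> cycle_num m j" if "\<rho> \<le> j" for j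
    using that
  proof (induction j rule: dec_induct)
    case base
    then show ?case using turn by simp
  next
    case (step j)
    then show ?case using cycle_num_decreasing_step[of m j] by simp
  qed
  ultimately show ?thesis unfolding peaks_at_def by blast
qed

lemma cycle_num_peak_pos:
  assumes "2 \<le> m" "peaks_at (cycle_num m) \<rho>"
  shows "1 \<le> \<rho>"
proof (rule ccontr)
  assume "\<not> 1 \<le> \<rho>"
  then have "\<rho> = 0" by simp
  then have "cycle_num m (Suc 0) \<le> cycle_num m 0"
    using assms(2) unfolding peaks_at_def by blast
  then show False using assms(1) cycle_num_1[of m] by simp
qed

lemma cycle_num_peak_bounds:
  assumes "12 \<le> m" "peaks_at (cycle_num m) \<rho>"
  shows "2 \<le> \<rho>" "2 * \<rho> + 4 \<le> m"
proof -
  have "2 * (m - 2) * cycle_num m 2 = (m - 2) * ((m - 3) * m)"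
    using cycle_num_Suc[of 1 m] assms(1) cycle_num_1[of m] by (simp add: numeral_eq_Suc)
  then have "2 * cycle_num m 2 = (m - 3) * m"
    using assms(1) by simp
  moreover have "9 * m \<le> (m - 3) * m"
    using assms(1) by (intro mult_le_mono1) simp
  ultimately have "cycle_num m 1 < cycle_num m 2"
    using assms(1) cycle_num_1[of m] by linarith
  then show rho: "2 \<le> \<rho>"
    using assms(2) unfolding peaks_at_def by (metis Suc_1 le_less_linear less_Suc_eq_le not_le)
  define j where "j = \<rho> - 1"
  have rho_j: "\<rho> = j + 1" using rho by (simp add: j_def)
  have up: "cycle_num m j < cycle_num m (j + 1)"
    using assms(2) rho_j unfolding peaks_at_def by simp
  have "2 * (j + 1) \<le> m"
    using up cycle_num_eq_0[of m "j + 1"] rho rho_j by (cases "m < 2 * (j + 1)") auto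
  then have "(j + 1) * (j + 1) \<le> (j + 1) * (m - j - 1)"
    by (intro mult_le_mono) auto
  moreover have "(j + 1) * (m - j - 1) < (m - 2 * j) * (m - 2 * j - 1)"
    using less_factor_of_cross_eq[OF cycle_num_Suc up] \<open>2 * (j + 1) \<le> m\<close> by simp
  ultimately have square: "(j + 1) * (j + 1) < (m - 2 * j) * (m - 2 * j - 1)"
    by linarith
  show "2 * \<rho> + 4 \<le> m"
  proof (rule ccontr)
    assume "\<not> 2 * \<rho> + 4 \<le> m"
    then have "(m - 2 * j) * (m - 2 * j - 1) \<le> 5 * 4"
      using rho_j by (intro mult_le_mono) auto
    then have "(j + 1) * (j + 1) < 5 * 5" using square by linarith
    then have "j + 1 < 5" by (metis mult_le_mono not_le)
    then show False using \<open>\<not> 2 * \<rho> + 4 \<le> m\<close> assms(1) rho_j by simp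
  qed
qed

lemma tadpole_num_increasing_below:
  assumes "peaks_at (cycle_num m) \<rho>" "j < \<rho>"
  shows "tadpole_num m j < tadpole_num m (Suc j)"
proof -
  have c_up: "cycle_num m i < cycle_num m (Suc i)" if "i \<le> j" for i
    using assms that unfolding peaks_at_def by simp
  consider "j = 0" | "j = 1" | i where "j = i + 2" by (metis One_nat_def add_2_eq_Suc' not0_implies_Suc)
  then show ?thesis
  proof cases
    case 1
    then show ?thesis by (simp add: tadpole_num_def)
  next
    case 2
    then show ?thesis using c_up[of 0] c_up[of 1] by (simp add: tadpole_num_def)
  next
    case 3
    have "cycle_num m (i + 1) < cycle_num m (i + 2)" "cycle_num m (i + 2) < cycle_num m (Suc (i + 2))"
      using c_up[of "i + 1"] c_up[of "i + 2"] 3 by simp_all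
    moreover from this have "path_num m i \<le> path_num m (i + 1)" "path_num m (i + 1) \<le> path_num m (i + 2)"
      using path_num_mono_step[of m i] path_num_mono_step[of m "i + 1"] by simp_all
    ultimately show ?thesis
      using tadpole_num_Suc_Suc[of m i] tadpole_num_Suc_Suc[of m "i + 1"] unfolding 3 by simp
  qed
qed

lemma tadpole_num_decreasing_from:
  assumes "peaks_at (cycle_num m) \<rho>" "\<rho> + 2 \<le> j"
  shows "tadpole_num m (Suc j) \<le> tadpole_num m j"
proof -
  define i where "i = j - 2"
  have j: "j = i + 2" "Suc j = (i + 1) + 2" and "\<rho> \<le> i" using assms(2) by (simp_all add: i_def)
  then have c_down: "cycle_num m (i + 1) \<le> cycle_num m i" "cycle_num m (i + 2) \<le> cycle_num m (i + 1)"
    "cycle_num m (i + 1 + 2) \<le> cycle_num m (i + 2)"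
    using assms(1) unfolding peaks_at_def by (simp_all add: add.assoc)
  then have "path_num m (i + 1) \<le> path_num m i" "path_num m (i + 2) \<le> path_num m (i + 1)"
    using path_num_antimono_step[of m i] path_num_antimono_step[of m "i + 1"] by (simp_all add: add.assoc)
  then show ?thesis
    using c_down tadpole_num_Suc_Suc[of m i] tadpole_num_Suc_Suc[of m "i + 1"] unfolding j by simp
qed

text \<open>For m \<le> 11 the mode of c can be too close to m/2 for \<open>tadpole_num_log_concave\<close>
  (e.g. m = 9, where it is 3), so these cases are evaluated.\<close>

lemma tadpole_num_turn_small:
  assumes "5 \<le> m" "m \<le> 11" "k < 6" "tadpole_num m (k + 1) \<le> tadpole_num m k"
  shows "tadpole_num m (k + 2) \<le> tadpole_num m (k + 1)"
proof -
  have "list_all (\<lambda>m. list_all (\<lambda>k. tadpole_num m (k + 1) \<le> tadpole_num m k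
      \<longrightarrow> tadpole_num m (k + 2) \<le> tadpole_num m (k + 1)) [0..<6]) [5..<12]"
    by code_simp
  moreover have "m \<in> set [5..<12]" "k \<in> set [0..<6]" using assms by auto
  ultimately show ?thesis using assms(4) unfolding list_all_iff by blast
qed

lemma tadpole_num_turn:
  assumes "5 \<le> m" "peaks_at (cycle_num m) \<rho>" "tadpole_num m (\<rho> + 1) \<le> tadpole_num m \<rho>"
  shows "tadpole_num m (\<rho> + 2) \<le> tadpole_num m (\<rho> + 1)"
proof -
  have "1 \<le> \<rho>" using cycle_num_peak_pos[OF _ assms(2)] assms(1) by simp
  then have "\<rho> - 1 < \<rho>" by simp
  then have "cycle_num m (\<rho> - 1) < cycle_num m (Suc (\<rho> - 1))"
    using assms(2) unfolding peaks_at_def by blast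
  then have c_pos: "0 < cycle_num m \<rho>"
    using \<open>1 \<le> \<rho>\<close> by simp
  then have t_pos: "0 < tadpole_num m \<rho>"
    by (simp add: tadpole_num_def)
  have "2 * \<rho> \<le> m"
  proof (rule ccontr)
    assume "\<not> 2 * \<rho> \<le> m"
    then have "cycle_num m \<rho> = 0" using assms(1) by (intro cycle_num_eq_0) auto
    then show False using c_pos by simp
  qed
  show ?thesis
  proof (cases "m \<le> 11")
    case True
    then show ?thesis
      using tadpole_num_turn_small assms(1,3) \<open>2 * \<rho> \<le> m\<close> by simp
  next
    case False
    then have "2 \<le> \<rho>" "2 * \<rho> + 4 \<le> m"
      using cycle_num_peak_bounds[of m \<rho>] assms(2) by simp_all
    then have "tadpole_num m (\<rho> + 1 - 1) * tadpole_num m (\<rho> + 1 + 1) \<le> (tadpole_num m (\<rho> + 1))\<^sup>2"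
      by (intro tadpole_num_log_concave) simp_all
    then have "tadpole_num m \<rho> * tadpole_num m (\<rho> + 2) \<le> (tadpole_num m (\<rho> + 1))\<^sup>2"
      by (simp only: add_diff_cancel_right' add.assoc one_add_one)
    then show ?thesis
      using le_of_log_concave assms(3) t_pos by blast
  qed
qed

lemma tadpole_num_peaks:
  assumes "5 \<le> m" "peaks_at (cycle_num m) \<rho>"
  shows "\<exists>\<mu>\<in>{\<rho>, \<rho> + 1, \<rho> + 2}. peaks_at (tadpole_num m) \<mu>"
  by (rule peaks_at_within_two)
    (use assms tadpole_num_increasing_below tadpole_num_decreasing_from tadpole_num_turn in blast)+

theorem proposition3p3:
  fixes m :: nat
  assumes "m \<ge> 5"
  shows "unimodal (indep_poly (tadpole_vertices m 3) (tadpole_edges m 3)) \<and>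
         mode (indep_poly (tadpole_vertices m 3) (tadpole_edges m 3))
           \<in> {mode (indep_poly (cycle_vertices m) (cycle_edges m)),
               mode (indep_poly (cycle_vertices m) (cycle_edges m)) + 1,
               mode (indep_poly (cycle_vertices m) (cycle_edges m)) + 2}"
proof -
  define C where "C = indep_poly (cycle_vertices m) (cycle_edges m)"
  define T where "T = indep_poly (tadpole_vertices m 3) (tadpole_edges m 3)"
  have "finite (cycle_vertices m)" "finite (tadpole_vertices m 3)"
    by (simp_all add: cycle_vertices_def tadpole_vertices_def)
  then have coeffs: "coeff C = cycle_num m" "coeff T = tadpole_num m"
    using assms unfolding C_def T_def
    by (simp_all add: fun_eq_iff coeff_indep_poly indep_count_cycle indep_count_tadpole)
  obtain \<rho> where \<rho>: "peaks_at (cycle_num m) \<rho>"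
    using cycle_num_peaks assms by force
  then obtain \<mu> where \<mu>: "\<mu> \<in> {\<rho>, \<rho> + 1, \<rho> + 2}" "peaks_at (tadpole_num m) \<mu>"
    using tadpole_num_peaks assms by blast
  have "mode C = \<rho>"
    using unimodal_mode_eq_if_peaks_at[of C \<rho>] \<rho> coeffs by simp
  moreover have "unimodal T \<and> mode T = \<mu>"
    using unimodal_mode_eq_if_peaks_at[of T \<mu>] \<mu>(2) coeffs by simp
  ultimately show ?thesis
    using \<mu>(1) unfolding C_def T_def by simp
qed

end
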